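(* Let $\mathfrak g$ be a $3$-dimensional complex vector space. Every non-degenerate product $\mu$ on $\mathfrak g$ is equivalent (under the $\operatorname{GL}(\mathfrak g)$-action) to exactly one of the products whose matrices, in a suitable basis, are $$\mu_{1;a}=\begin{pmatrix}1&0&0\\0&1&-a\\0&a&1\end{pmatrix}\ (a\in\mathbb C\setminus\{0\}),\qquad \mu_2=\mathbb 1_3,\qquad \mu_3=\begin{pmatrix}0&1&0\\1&0&-1\\0&1&1\end{pmatrix}.$$ Moreover, $\mu_{1;a}$ is equivalent to $\mu_{1;a'}$ if and only if $a=\pm a'$.
   Context: A product on a complex vector space $\mathfrak g$ is a skew-symmetric bilinear map $\mu:\mathfrak g\times\mathfrak g\to\mathfrak g$. Given a basis $\{e_1,e_2,e_3\}$, the matrix $M_\mu=(\mu_{ij})$ of $\mu$ is defined by $\mu(e_2,e_3)=\sum_i\mu_{i1}e_i$, $\mu(e_3,e_1)=\sum_i\mu_{i2}e_i$, $\mu(e_1,e_2)=\sum_i\mu_{i3}e_i$; this gives a bijection between products and $3\times 3$ complex matrices. $\operatorname{GL}(\mathfrak g)$ acts on products by $(g\cdot\mu)(x,y)=g(\mu(g^{-1}x,g^{-1}y))$, and in matrix terms $M_{g\cdot\mu}=(\det g)^{-1}gM_\mu g^t$; two products are equivalent if they lie in the same orbit. The product $\mu$ is called non-degenerate if the symmetric part $\tfrac12(M_\mu+M_\mu^t)$ of its matrix is an invertible matrix, and degenerate otherwise. *)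

theory Defs
  imports "HOL-Analysis.Analysis"
begin

text \<open>A product on the 3-dimensional complex space is identified (via the fixed
basis e1,e2,e3) with its 3x3 complex matrix M, entry (i,j) being M $ i $ j.\<close>
type_synonym cmat3 = "complex^3^3"

definition gl_act :: "cmat3 \<Rightarrow> cmat3 \<Rightarrow> cmat3" where
  "gl_act g M = mat (inverse (det g)) ** (g ** M ** transpose g)"

definition prod_equiv :: "cmat3 \<Rightarrow> cmat3 \<Rightarrow> bool" where
  "prod_equiv M N \<longleftrightarrow> (\<exists>g. invertible g \<and> N = gl_act g M)"

definition non_degenerate :: "cmat3 \<Rightarrow> bool" where
  "non_degenerate M \<longleftrightarrow> invertible (mat (1/2) ** (M + transpose M))"

definition mu1 :: "complex \<Rightarrow> cmat3" where
  "mu1 a = vector [vector [1, 0, 0], vector [0, 1, -a], vector [0, a, 1]]"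

definition mu2 :: cmat3 where
  "mu2 = mat 1"

definition mu3 :: cmat3 where
  "mu3 = vector [vector [0, 1, 0], vector [1, 0, -1], vector [0, 1, 1]]"

end

theory Submission
  imports Defs
begin

text \<open>The symmetric part \<open>M + M\<^sup>T\<close> transforms under \<open>g\<close> by the same rule
  \<open>X \<mapsto> (det g)\<^sup>-\<^sup>1 g X g\<^sup>T\<close> as \<open>M\<close>. Hence symmetry of \<open>M\<close> and the ratio
  \<open>det M / det (M + M\<^sup>T)\<close> are invariants; they separate the normal forms and force
  \<open>a\<^sup>2 = a'\<^sup>2\<close> when \<open>\<mu>\<^sub>1\<^sub>;\<^sub>a\<close> and \<open>\<mu>\<^sub>1\<^sub>;\<^sub>a\<^sub>'\<close> are equivalent.
  Conversely, a nondegenerate complex symmetric matrix is congruent to the identity, so after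
  rescaling every nondegenerate product becomes \<open>1 + [v]\<^sub>\<times>\<close>, with \<open>[v]\<^sub>\<times>\<close> the
  cross product matrix of some \<open>v \<in> \<complex>\<^sup>3\<close>. A matrix \<open>Q \<in> SO(3,\<complex>)\<close> acts by
  \<open>v \<mapsto> Q v\<close>, and a half-turn moves \<open>v\<close> to any \<open>w\<close> with \<open>w\<cdot>w = v\<cdot>v\<close> as long as
  \<open>v + w\<close> is not isotropic. So \<open>v\<close> can be moved to \<open>(a, 0, 0)\<close> with \<open>a\<^sup>2 = v\<cdot>v \<noteq> 0\<close>
  (giving \<open>\<mu>\<^sub>1\<^sub>;\<^sub>a\<close>) or, if \<open>v \<noteq> 0\<close> is isotropic, to \<open>(1, i, 0)\<close>
  (giving \<open>\<mu>\<^sub>3\<close>); \<open>v = 0\<close> is \<open>\<mu>\<^sub>2\<close>.\<close>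

lemma mat_mult_commute: "mat c ** A = A ** (mat c :: 'a::comm_semiring_1^'n^'n)"
  by (simp add: vec_eq_iff matrix_matrix_mult_def mat_def mult.commute if_distrib if_distribR cong: if_cong)

lemma mat_mult_mat: "mat a ** mat b = (mat (a * b) :: 'a::comm_semiring_1^'n^'n)"
  by (simp add: vec_eq_iff matrix_matrix_mult_def mat_def if_distrib if_distribR sum.If_cases)

lemma det_mat: "det (mat c :: 'a::comm_ring_1^'n^'n) = c ^ CARD('n)"
  by (simp add: det_diagonal mat_def)

lemma transpose_add: "transpose (A + B) = transpose A + (transpose B :: 'a::monoid_add^'n^'m)"
  by (simp add: vec_eq_iff transpose_def)

lemma matrix_add_rdistrib: "(A + B) ** C = A ** C + B ** (C :: 'a::semiring_1^'p^'n)"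
  by (simp add: vec_eq_iff matrix_matrix_mult_def distrib_right sum.distrib)

definition mat3 ::
  "complex \<Rightarrow> complex \<Rightarrow> complex \<Rightarrow> complex \<Rightarrow> complex \<Rightarrow> complex \<Rightarrow> complex \<Rightarrow> complex \<Rightarrow> complex \<Rightarrow> cmat3"
  where "mat3 a b c d e f g h i = vector [vector [a, b, c], vector [d, e, f], vector [g, h, i]]"

lemma mat3_nth [simp]:
  "mat3 a b c d e f g h i $ 1 $ 1 = a" "mat3 a b c d e f g h i $ 1 $ 2 = b" "mat3 a b c d e f g h i $ 1 $ 3 = c"
  "mat3 a b c d e f g h i $ 2 $ 1 = d" "mat3 a b c d e f g h i $ 2 $ 2 = e" "mat3 a b c d e f g h i $ 2 $ 3 = f"
  "mat3 a b c d e f g h i $ 3 $ 1 = g" "mat3 a b c d e f g h i $ 3 $ 2 = h" "mat3 a b c d e f g h i $ 3 $ 3 = i"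
  by (simp_all add: mat3_def)

lemma mat3_eq_iff:
  "mat3 a b c d e f g h i = mat3 a' b' c' d' e' f' g' h' i' \<longleftrightarrow>
   a = a' \<and> b = b' \<and> c = c' \<and> d = d' \<and> e = e' \<and> f = f' \<and> g = g' \<and> h = h' \<and> i = i'"
  by (auto simp: vec_eq_iff forall_3)

lemma mat3_mult:
  "mat3 a b c d e f g h i ** mat3 a' b' c' d' e' f' g' h' i' =
   mat3 (a*a'+b*d'+c*g') (a*b'+b*e'+c*h') (a*c'+b*f'+c*i')
        (d*a'+e*d'+f*g') (d*b'+e*e'+f*h') (d*c'+e*f'+f*i')
        (g*a'+h*d'+i*g') (g*b'+h*e'+i*h') (g*c'+h*f'+i*i')"
  by (simp add: vec_eq_iff forall_3 matrix_matrix_mult_def sum_3)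

lemma transpose_mat3: "transpose (mat3 a b c d e f g h i) = mat3 a d g b e h c f i"
  by (simp add: vec_eq_iff forall_3 transpose_def)

lemma det_mat3: "det (mat3 a b c d e f g h i) = a*e*i + b*f*g + c*d*h - a*f*h - b*d*i - c*e*g"
  by (simp add: det_3)

lemma mat_eq_mat3: "(mat x :: cmat3) = mat3 x 0 0 0 x 0 0 0 x"
  by (simp add: vec_eq_iff forall_3 mat_def)

lemma mat3_add:
  "mat3 a b c d e f g h i + mat3 a' b' c' d' e' f' g' h' i' =
   mat3 (a+a') (b+b') (c+c') (d+d') (e+e') (f+f') (g+g') (h+h') (i+i')"
  by (simp add: vec_eq_iff forall_3)

lemma mu1_eq_mat3: "mu1 a = mat3 1 0 0 0 1 (-a) 0 a 1"
  by (simp add: mu1_def mat3_def)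

lemma mu2_eq_mat3: "mu2 = mat3 1 0 0 0 1 0 0 0 1"
  by (simp add: mu2_def mat_eq_mat3)

lemma mu3_eq_mat3: "mu3 = mat3 0 1 0 1 0 (-1) 0 1 1"
  by (simp add: mu3_def mat3_def)

section \<open>The action of \<open>GL(3, \<complex>)\<close>\<close>

lemma gl_act_mult: "gl_act (g ** h) M = gl_act g (gl_act h M)"
proof -
  have "g ** (mat c ** X) ** transpose g = mat c ** (g ** X ** transpose g)" for c and X :: cmat3
    by (metis mat_mult_commute matrix_mul_assoc)
  then have "gl_act g (gl_act h M)
      = mat (inverse (det g)) ** (mat (inverse (det h)) ** (g ** (h ** M ** transpose h) ** transpose g))"
    by (simp only: gl_act_def)
  also have "\<dots> = gl_act (g ** h) M"
    by (simp add: gl_act_def det_mul mat_mult_mat matrix_transpose_mul matrix_mul_assoc)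
  finally show ?thesis ..
qed

lemma gl_act_one: "gl_act (mat 1) M = M"
  by (simp add: gl_act_def)

lemma gl_act_mat: "gl_act (mat l) M = mat (inverse l) ** M"
proof -
  have "mat l ** M ** mat l = mat (l * l) ** M"
    by (metis mat_mult_commute mat_mult_mat matrix_mul_assoc)
  then show ?thesis
    by (simp add: gl_act_def det_mat matrix_mul_assoc mat_mult_mat power3_eq_cube field_simps)
qed

lemma gl_act_cancel:
  assumes "invertible g" and "gl_act g A = gl_act g B"
  shows "A = B"
proof -
  obtain h where "h ** g = mat 1"
    using assms(1) invertible_left_inverse by blast
  then show ?thesis
    using assms(2) by (metis gl_act_mult gl_act_one)
qed

lemma transpose_gl_act: "transpose (gl_act g M) = gl_act g (transpose M)"
proof -
  have "transpose (gl_act g M) = (g ** transpose M ** transpose g) ** mat (inverse (det g))"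
    by (simp add: gl_act_def matrix_transpose_mul matrix_mul_assoc)
  then show ?thesis
    unfolding gl_act_def by (simp only: mat_mult_commute)
qed

lemma gl_act_add: "gl_act g (A + B) = gl_act g A + gl_act g B"
  by (simp add: gl_act_def matrix_add_ldistrib matrix_add_rdistrib)

lemma det_gl_act: "det (gl_act g M) = det M / det g"
  by (simp add: gl_act_def det_mul det_mat power3_eq_cube field_simps)

lemma prod_equiv_refl: "prod_equiv M M"
  unfolding prod_equiv_def using gl_act_one invertible_def by (metis matrix_mul_lid)

lemma prod_equiv_trans:
  assumes "prod_equiv A B" and "prod_equiv B C"
  shows "prod_equiv A C"
proof -
  obtain g h where "invertible g" "B = gl_act g A" "invertible h" "C = gl_act h B"
    using assms unfolding prod_equiv_def by blast
  then show ?thesis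
    unfolding prod_equiv_def by (metis gl_act_mult invertible_mult)
qed

section \<open>Invariants\<close>

lemma prod_equiv_symmetric_iff:
  assumes "prod_equiv M N"
  shows "transpose N = N \<longleftrightarrow> transpose M = M"
  using assms unfolding prod_equiv_def by (metis gl_act_cancel transpose_gl_act)

lemma prod_equiv_det_ratio:
  assumes "prod_equiv M N"
  shows "det N * det (M + transpose M) = det M * det (N + transpose N)"
proof -
  obtain g where "invertible g" and N: "N = gl_act g M"
    using assms unfolding prod_equiv_def by blast
  have "N + transpose N = gl_act g (M + transpose M)"
    by (simp add: N gl_act_add transpose_gl_act)
  then show ?thesis
    by (simp add: N det_gl_act)
qed

lemma mu1_not_equiv_mu2: "a \<noteq> 0 \<Longrightarrow> \<not> prod_equiv (mu1 a) mu2"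
  using prod_equiv_symmetric_iff[of "mu1 a" mu2]
  by (auto simp: mu1_eq_mat3 mu2_eq_mat3 transpose_mat3 mat3_eq_iff)

lemma mu2_not_equiv_mu3: "\<not> prod_equiv mu2 mu3"
  using prod_equiv_symmetric_iff[of mu2 mu3]
  by (auto simp: mu2_eq_mat3 mu3_eq_mat3 transpose_mat3 mat3_eq_iff)

lemma mu1_not_equiv_mu3: "a \<noteq> 0 \<Longrightarrow> \<not> prod_equiv (mu1 a) mu3"
  using prod_equiv_det_ratio[of "mu1 a" mu3]
  by (auto simp: mu1_eq_mat3 mu3_eq_mat3 transpose_mat3 mat3_add det_mat3 algebra_simps)

lemma mu1_equiv_mu1_iff: "prod_equiv (mu1 a) (mu1 a') \<longleftrightarrow> a = a' \<or> a = - a'"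
proof
  assume "prod_equiv (mu1 a) (mu1 a')"
  from prod_equiv_det_ratio[OF this] have "a'\<^sup>2 = a\<^sup>2"
    by (simp add: mu1_eq_mat3 transpose_mat3 mat3_add det_mat3 algebra_simps power2_eq_square)
  then show "a = a' \<or> a = - a'"
    by (metis power2_eq_iff)
next
  let ?g = "mat3 (-1) 0 0 0 (-1) 0 0 0 1"
  have "gl_act ?g (mu1 a) = mu1 (- a)"
    by (simp add: gl_act_def det_mat3 mat_eq_mat3 mat3_mult transpose_mat3 mu1_eq_mat3)
  moreover have "invertible ?g"
    by (simp add: invertible_det_nz det_mat3)
  ultimately have "prod_equiv (mu1 a) (mu1 (- a))"
    unfolding prod_equiv_def by metis
  then show "a = a' \<or> a = - a' \<Longrightarrow> prod_equiv (mu1 a) (mu1 a')"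
    using prod_equiv_refl by auto
qed

section \<open>Congruence of symmetric matrices\<close>

definition congruent_mat :: "'a::idom^'n^'n \<Rightarrow> 'a^'n^'n \<Rightarrow> bool" where
  "congruent_mat S T \<longleftrightarrow> (\<exists>P. det P \<noteq> 0 \<and> T = P ** S ** transpose P)"

lemma congruent_matI: "det P \<noteq> 0 \<Longrightarrow> T = P ** S ** transpose P \<Longrightarrow> congruent_mat S T"
  unfolding congruent_mat_def by blast

lemma congruent_mat_refl: "congruent_mat S S"
  by (rule congruent_matI[of "mat 1"]) simp_all

lemma congruent_mat_trans:
  fixes S :: "'a::idom^'n^'n"
  assumes "congruent_mat S T" and "congruent_mat T U"
  shows "congruent_mat S U"
proof -
  obtain P Q where "det P \<noteq> 0" "T = P ** S ** transpose P" "det Q \<noteq> 0" "U = Q ** T ** transpose Q"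
    using assms unfolding congruent_mat_def by blast
  then show ?thesis
    by (intro congruent_matI[of "Q ** P"]) (simp_all add: det_mul matrix_transpose_mul matrix_mul_assoc)
qed

lemma congruent_mat_det_nonzero:
  fixes S :: "'a::idom^'n^'n"
  shows "congruent_mat S T \<Longrightarrow> det S \<noteq> 0 \<Longrightarrow> det T \<noteq> 0"
  unfolding congruent_mat_def by (auto simp: det_mul)

text \<open>A nondegenerate symmetric form has a non-isotropic basis vector after a change of basis:
  either some diagonal entry is nonzero and can be permuted to the front, or some off-diagonal entry \<open>x\<close> is, and
  \<open>e\<^sub>i + e\<^sub>j\<close> has square length \<open>2x\<close>.\<close>
lemma congruent_mat_first_pivot:
  assumes "det (mat3 p q r q s t r t u) \<noteq> 0"
  obtains p' q' r' s' t' u'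
  where "p' \<noteq> 0" "congruent_mat (mat3 p q r q s t r t u) (mat3 p' q' r' q' s' t' r' t' u')"
proof -
  let ?S = "mat3 p q r q s t r t u"
  consider "p \<noteq> 0" | "p = 0" "s \<noteq> 0" | "p = 0" "s = 0" "u \<noteq> 0" | "p = 0" "s = 0" "u = 0" "q \<noteq> 0"
    | "p = 0" "s = 0" "u = 0" "q = 0" "r \<noteq> 0" | "p = 0" "q = 0" "r = 0"
    by blast
  then show ?thesis
  proof cases
    case 1
    then show ?thesis using that congruent_mat_refl by blast
  next
    case 2
    have "congruent_mat ?S (mat3 s q t q p r t r u)"
      by (rule congruent_matI[of "mat3 0 1 0 1 0 0 0 0 1"]) (simp_all add: det_mat3 mat3_mult transpose_mat3)
    with 2 show ?thesis using that by blast
  next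
    case 3
    have "congruent_mat ?S (mat3 u t r t s q r q p)"
      by (rule congruent_matI[of "mat3 0 0 1 0 1 0 1 0 0"]) (simp_all add: det_mat3 mat3_mult transpose_mat3)
    with 3 show ?thesis using that by blast
  next
    case 4
    have "congruent_mat ?S (mat3 (2*q) q (r+t) q 0 t (r+t) t 0)"
      by (rule congruent_matI[of "mat3 1 1 0 0 1 0 0 0 1"])
        (use 4 in \<open>simp_all add: det_mat3 mat3_mult transpose_mat3 mat3_eq_iff\<close>)
    with 4 show ?thesis using that[of "2*q" q "r+t" 0 t 0] by simp
  next
    case 5
    have "congruent_mat ?S (mat3 (2*r) t r t 0 t r t 0)"
      by (rule congruent_matI[of "mat3 1 0 1 0 1 0 0 0 1"])
        (use 5 in \<open>simp_all add: det_mat3 mat3_mult transpose_mat3 mat3_eq_iff\<close>)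
    with 5 show ?thesis using that[of "2*r" t r 0 t 0] by simp
  next
    case 6
    with assms show ?thesis by (simp add: det_mat3)
  qed
qed

lemma congruent_mat_clear_first:
  assumes "p \<noteq> 0"
  shows "congruent_mat (mat3 p q r q s t r t u)
           (mat3 p 0 0 0 (s - q*q/p) (t - q*r/p) 0 (t - q*r/p) (u - r*r/p))"
  by (rule congruent_matI[of "mat3 1 0 0 (-q/p) 1 0 (-r/p) 0 1"])
    (use assms in \<open>simp_all add: det_mat3 mat3_mult transpose_mat3 mat3_eq_iff field_simps\<close>)

lemma congruent_mat_second_pivot:
  assumes "det (mat3 p 0 0 0 s t 0 t u) \<noteq> 0"
  obtains s' t' u' where "s' \<noteq> 0" "congruent_mat (mat3 p 0 0 0 s t 0 t u) (mat3 p 0 0 0 s' t' 0 t' u')"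
proof -
  let ?S = "mat3 p 0 0 0 s t 0 t u"
  consider "s \<noteq> 0" | "s = 0" "u \<noteq> 0" | "s = 0" "u = 0" "t \<noteq> 0" | "s = 0" "u = 0" "t = 0"
    by blast
  then show ?thesis
  proof cases
    case 1
    then show ?thesis using that congruent_mat_refl by blast
  next
    case 2
    have "congruent_mat ?S (mat3 p 0 0 0 u t 0 t s)"
      by (rule congruent_matI[of "mat3 1 0 0 0 0 1 0 1 0"]) (simp_all add: det_mat3 mat3_mult transpose_mat3)
    with 2 show ?thesis using that by blast
  next
    case 3
    have "congruent_mat ?S (mat3 p 0 0 0 (2*t) t 0 t 0)"
      by (rule congruent_matI[of "mat3 1 0 0 0 1 1 0 0 1"])
        (use 3 in \<open>simp_all add: det_mat3 mat3_mult transpose_mat3 mat3_eq_iff\<close>)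
    with 3 show ?thesis using that[of "2*t" t 0] by simp
  next
    case 4
    with assms show ?thesis by (simp add: det_mat3)
  qed
qed

lemma congruent_mat_clear_second:
  assumes "s \<noteq> 0"
  shows "congruent_mat (mat3 p 0 0 0 s t 0 t u) (mat3 p 0 0 0 s 0 0 0 (u - t*t/s))"
  by (rule congruent_matI[of "mat3 1 0 0 0 1 0 0 (-t/s) 1"])
    (use assms in \<open>simp_all add: det_mat3 mat3_mult transpose_mat3 mat3_eq_iff field_simps\<close>)

lemma congruent_mat_diagonal_one:
  assumes "p \<noteq> 0" "s \<noteq> 0" "u \<noteq> 0"
  shows "congruent_mat (mat3 p 0 0 0 s 0 0 0 u) (mat 1)"
proof -
  have root: "inverse (csqrt x) * x * inverse (csqrt x) = 1" if "x \<noteq> 0" for x :: complex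
    using that by (simp add: field_simps power2_eq_square[symmetric])
  show ?thesis
    by (rule congruent_matI[of "mat3 (inverse (csqrt p)) 0 0 0 (inverse (csqrt s)) 0 0 0 (inverse (csqrt u))"])
      (use assms root in \<open>simp_all add: det_mat3 mat3_mult transpose_mat3 mat_eq_mat3\<close>)
qed

lemma symmetric_congruent_mat_one:
  assumes "transpose S = S" and "det S \<noteq> 0"
  shows "congruent_mat S (mat 1 :: cmat3)"
proof -
  have "S $ j $ i = S $ i $ j" for i j
    using arg_cong[OF assms(1), of "\<lambda>A. A $ i $ j"] by (simp add: transpose_def)
  then have "S = mat3 (S$1$1) (S$1$2) (S$1$3) (S$1$2) (S$2$2) (S$2$3) (S$1$3) (S$2$3) (S$3$3)"
    by (simp add: vec_eq_iff forall_3)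
  then obtain p q r s t u where S: "S = mat3 p q r q s t r t u"
    by blast
  obtain p1 q1 r1 s1 t1 u1 where p1: "p1 \<noteq> 0"
    and "congruent_mat S (mat3 p1 q1 r1 q1 s1 t1 r1 t1 u1)"
    using assms(2) unfolding S by (rule congruent_mat_first_pivot)
  then have S1: "congruent_mat S
      (mat3 p1 0 0 0 (s1 - q1*q1/p1) (t1 - q1*r1/p1) 0 (t1 - q1*r1/p1) (u1 - r1*r1/p1))"
    using congruent_mat_trans congruent_mat_clear_first by blast
  obtain s2 t2 u2 where s2: "s2 \<noteq> 0"
    and "congruent_mat (mat3 p1 0 0 0 (s1 - q1*q1/p1) (t1 - q1*r1/p1) 0 (t1 - q1*r1/p1) (u1 - r1*r1/p1))
      (mat3 p1 0 0 0 s2 t2 0 t2 u2)"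
    by (rule congruent_mat_second_pivot[OF congruent_mat_det_nonzero[OF S1 assms(2)]])
  then have S2: "congruent_mat S (mat3 p1 0 0 0 s2 0 0 0 (u2 - t2*t2/s2))"
    using S1 congruent_mat_trans congruent_mat_clear_second[OF s2] by blast
  then have "u2 - t2*t2/s2 \<noteq> 0"
    using congruent_mat_det_nonzero[OF S2 assms(2)] by (simp add: det_mat3)
  then show ?thesis
    using congruent_mat_trans[OF S2 congruent_mat_diagonal_one[OF p1 s2]] by blast
qed

section \<open>Cross product matrices and rotations\<close>

definition cross_matrix :: "complex^3 \<Rightarrow> cmat3" where
  "cross_matrix v = mat3 0 (- v$3) (v$2) (v$3) 0 (- v$1) (- v$2) (v$1) 0"

definition cofactor_matrix :: "cmat3 \<Rightarrow> cmat3" where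
  "cofactor_matrix g =
     mat3 (g$2$2*g$3$3 - g$2$3*g$3$2) (g$2$3*g$3$1 - g$2$1*g$3$3) (g$2$1*g$3$2 - g$2$2*g$3$1)
          (g$1$3*g$3$2 - g$1$2*g$3$3) (g$1$1*g$3$3 - g$1$3*g$3$1) (g$1$2*g$3$1 - g$1$1*g$3$2)
          (g$1$2*g$2$3 - g$1$3*g$2$2) (g$1$3*g$2$1 - g$1$1*g$2$3) (g$1$1*g$2$2 - g$1$2*g$2$1)"

lemma cofactor_matrix_mult_transpose: "cofactor_matrix g ** transpose g = mat (det g)"
  by (simp add: cofactor_matrix_def vec_eq_iff forall_3 matrix_matrix_mult_def sum_3 det_3
      transpose_def mat_def; simp add: algebra_simps)

lemma congruence_cross_matrix: "g ** cross_matrix v ** transpose g = cross_matrix (cofactor_matrix g *v v)"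
  by (simp add: cofactor_matrix_def cross_matrix_def vec_eq_iff forall_3 matrix_matrix_mult_def
      matrix_vector_mult_def sum_3 transpose_def; simp add: algebra_simps)

lemma gl_act_rotation_cross_matrix:
  assumes "Q ** transpose Q = mat 1" and "det Q = 1"
  shows "gl_act Q (mat 1 + cross_matrix v) = mat 1 + cross_matrix (Q *v v)"
proof -
  have "cofactor_matrix Q = cofactor_matrix Q ** (transpose Q ** Q)"
    using assms(1) matrix_left_right_inverse by (metis matrix_mul_rid)
  also have "\<dots> = Q"
    by (simp add: matrix_mul_assoc cofactor_matrix_mult_transpose assms(2))
  finally show ?thesis
    by (simp add: gl_act_def assms matrix_add_ldistrib matrix_add_rdistrib congruence_cross_matrix)
qed

definition dotp :: "'a::comm_semiring_0^'n \<Rightarrow> 'a^'n \<Rightarrow> 'a" where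
  "dotp v w = (\<Sum>i\<in>UNIV. v$i * w$i)"

lemma dotp_commute: "dotp v w = dotp w v"
  by (simp add: dotp_def mult.commute)

lemma dotp_add_left: "dotp (u + v) w = dotp u w + dotp v w"
  by (simp add: dotp_def distrib_right sum.distrib)

lemma dotp_add_right: "dotp u (v + w) = dotp u v + dotp u w"
  by (simp add: dotp_def distrib_left sum.distrib)

lemma dotp_diff_right: "dotp u (v - w) = dotp u v - dotp u (w :: 'a::comm_ring^'n)"
  by (simp add: dotp_def right_diff_distrib sum_subtractf)

lemma dotp_smult_right: "dotp u (c *s v) = c * dotp u v"
  by (simp add: dotp_def sum_distrib_left mult_ac)

text \<open>Minus the reflection in the hyperplane orthogonal to \<open>u\<close>: in odd dimension this is a
  rotation, the half-turn about the axis \<open>u\<close>.\<close>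
definition half_turn :: "'a::field^'n \<Rightarrow> 'a^'n^'n" where
  "half_turn u = (\<chi> i j. 2 * u$i * u$j / dotp u u) - mat 1"

lemma half_turn_mult_vector: "half_turn u *v x = (2 * dotp u x / dotp u u) *s u - x"
proof -
  have "(\<chi> i j. 2 * u$i * u$j / dotp u u) *v x = (2 * dotp u x / dotp u u) *s u"
    by (simp add: vec_eq_iff matrix_vector_mult_def dotp_def sum_distrib_left sum_distrib_right
        sum_divide_distrib mult_ac)
  then show ?thesis
    by (simp add: half_turn_def matrix_vector_mult_diff_rdistrib)
qed

lemma transpose_half_turn: "transpose (half_turn u) = half_turn u"
  by (simp add: half_turn_def vec_eq_iff transpose_def mat_def mult.commute)

lemma half_turn_mult_self:
  assumes "dotp u u \<noteq> 0"
  shows "half_turn u ** half_turn u = mat 1"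
proof -
  have "dotp u (half_turn u *v x) = dotp u x" for x
    using assms by (simp add: half_turn_mult_vector dotp_diff_right dotp_smult_right)
  then have "half_turn u *v (half_turn u *v x) = x" for x
    by (simp add: half_turn_mult_vector)
  then show ?thesis
    by (simp add: matrix_eq matrix_vector_mul_assoc)
qed

lemma det_half_turn:
  fixes u :: "complex^3"
  assumes "dotp u u \<noteq> 0"
  shows "det (half_turn u) = 1"
proof -
  let ?k = "2 / dotp u u"
  have det_rank_one: "det ((\<chi> i j. k * u$i * u$j) - mat 1) = k * dotp u u - 1" for k
    by (simp add: det_3 mat_def dotp_def sum_3) algebra
  have "half_turn u = (\<chi> i j. ?k * u$i * u$j) - mat 1"
    by (simp add: half_turn_def)
  then have "det (half_turn u) = ?k * dotp u u - 1"
    by (simp only: det_rank_one)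
  then show ?thesis
    using assms by simp
qed

lemma half_turn_swap:
  assumes "dotp v v = dotp w w" and "dotp (v + w) (v + w) \<noteq> 0"
  shows "half_turn (v + w) *v v = w"
proof -
  have "dotp (v + w) (v + w) = 2 * dotp (v + w) v"
    using assms(1) by (simp add: dotp_add_left dotp_add_right dotp_commute[of v w])
  with assms(2) show ?thesis
    by (simp add: half_turn_mult_vector vec_eq_iff)
qed

section \<open>Normal forms\<close>

lemma prod_equiv_cross_matrix:
  assumes "dotp v v = dotp w w" and "dotp (v + w) (v + w) \<noteq> 0"
  shows "prod_equiv (mat 1 + cross_matrix v) (mat 1 + cross_matrix w)"
proof -
  let ?Q = "half_turn (v + w)"
  have "?Q ** transpose ?Q = mat 1"
    by (simp add: transpose_half_turn half_turn_mult_self assms(2))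
  moreover have "det ?Q = 1"
    by (rule det_half_turn[OF assms(2)])
  ultimately have "gl_act ?Q (mat 1 + cross_matrix v) = mat 1 + cross_matrix w"
    by (simp add: gl_act_rotation_cross_matrix half_turn_swap[OF assms])
  moreover have "invertible ?Q"
    by (simp add: invertible_det_nz \<open>det ?Q = 1\<close>)
  ultimately show ?thesis
    unfolding prod_equiv_def by metis
qed

lemma mu1_eq_cross_matrix: "mu1 a = mat 1 + cross_matrix (vector [a, 0, 0])"
  by (simp add: mu1_eq_mat3 cross_matrix_def mat_eq_mat3 mat3_add)

lemma mu2_eq_cross_matrix: "mu2 = mat 1 + cross_matrix 0"
  by (simp add: mu2_def cross_matrix_def mat3_def vec_eq_iff forall_3)

lemma isotropic_cross_matrix_equiv_mu3: "prod_equiv (mat 1 + cross_matrix (vector [1, \<i>, 0])) mu3"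
proof -
  let ?g = "mat3 1 \<i> 0 (-1/2) (\<i>/2) 0 0 0 \<i>"
  have "det ?g = -1"
    by (simp add: det_mat3 algebra_simps)
  moreover from this have "gl_act ?g (mat 1 + cross_matrix (vector [1, \<i>, 0])) = mu3"
    by (simp add: gl_act_def cross_matrix_def mat_eq_mat3 mat3_add mat3_mult transpose_mat3 mu3_eq_mat3
        mat3_eq_iff algebra_simps)
  ultimately show ?thesis
    unfolding prod_equiv_def by (metis invertible_det_nz neg_equal_0_iff_equal one_neq_zero)
qed

lemma isotropic_cross_matrix_equiv:
  assumes "v \<noteq> 0" and "dotp v v = 0"
  shows "prod_equiv (mat 1 + cross_matrix v) (mat 1 + cross_matrix (vector [1, \<i>, 0]))"
proof -
  let ?w = "vector [1, \<i>, 0] :: complex^3" and ?w' = "vector [1, - \<i>, 0] :: complex^3"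
  have isotropic: "dotp ?w ?w = 0" "dotp ?w' ?w' = 0"
    by (simp_all add: dotp_def sum_3)
  have sum_sq: "dotp (v + u) (v + u) = 2 * dotp v u" if "dotp u u = 0" for u
    using assms(2) that by (simp add: dotp_add_left dotp_add_right dotp_commute[of u v])
  show ?thesis
  proof (cases "dotp v ?w = 0")
    case False
    then show ?thesis
      using prod_equiv_cross_matrix assms(2) isotropic sum_sq by simp
  next
    case True
    have "dotp v ?w' \<noteq> 0"
    proof
      assume "dotp v ?w' = 0"
      with True have "v$1 = 0" "v$2 = 0"
        by (simp_all add: dotp_def sum_3 algebra_simps)
      with assms show False
        by (simp add: dotp_def sum_3 vec_eq_iff forall_3)
    qed
    then have "prod_equiv (mat 1 + cross_matrix v) (mat 1 + cross_matrix ?w')"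
      using prod_equiv_cross_matrix assms(2) isotropic sum_sq by simp
    moreover have "prod_equiv (mat 1 + cross_matrix ?w') (mat 1 + cross_matrix ?w)"
      by (rule prod_equiv_cross_matrix) (simp_all add: dotp_def sum_3)
    ultimately show ?thesis
      by (rule prod_equiv_trans)
  qed
qed

lemma anisotropic_cross_matrix_equiv_mu1:
  assumes "dotp v v \<noteq> 0"
  obtains a where "a \<noteq> 0" "prod_equiv (mat 1 + cross_matrix v) (mu1 a)"
proof -
  obtain a where sq: "a * a = dotp v v" and "a + v$1 \<noteq> 0"
  proof (cases "csqrt (dotp v v) + v$1 = 0")
    case True
    moreover have "csqrt (dotp v v) \<noteq> 0"
      using assms by simp
    ultimately show ?thesis
      using that[of "- csqrt (dotp v v)"] by (auto simp: power2_eq_square[symmetric] add_eq_0_iff)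
  next
    case False
    then show ?thesis
      using that[of "csqrt (dotp v v)"] by (simp add: power2_eq_square[symmetric])
  qed
  moreover have "a \<noteq> 0"
    using sq assms by auto
  moreover have "dotp (v + vector [a, 0, 0]) (v + vector [a, 0, 0]) = 2 * a * (a + v$1)"
    using sq by (simp add: dotp_def sum_3) algebra
  ultimately show ?thesis
    using that prod_equiv_cross_matrix[of v "vector [a, 0, 0]"]
    by (simp add: mu1_eq_cross_matrix dotp_def sum_3)
qed

lemma cross_matrix_classification:
  "(\<exists>a. a \<noteq> 0 \<and> prod_equiv (mat 1 + cross_matrix v) (mu1 a))
   \<or> prod_equiv (mat 1 + cross_matrix v) mu2 \<or> prod_equiv (mat 1 + cross_matrix v) mu3"
proof -
  consider "v = 0" | "dotp v v \<noteq> 0" | "v \<noteq> 0" "dotp v v = 0"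
    by blast
  then show ?thesis
  proof cases
    case 1
    then show ?thesis
      by (simp add: mu2_eq_cross_matrix prod_equiv_refl)
  next
    case 2
    then show ?thesis
      by (metis anisotropic_cross_matrix_equiv_mu1)
  next
    case 3
    then show ?thesis
      using isotropic_cross_matrix_equiv isotropic_cross_matrix_equiv_mu3 prod_equiv_trans by blast
  qed
qed

lemma sym_part_eq_2_imp_cross_matrix:
  assumes "N + transpose N = mat 2"
  shows "N = mat 1 + cross_matrix (vector [N$3$2, N$1$3, N$2$1])"
proof -
  have entry: "N$i$j + N$j$i = (if i = j then 2 else 0)" for i j
    using arg_cong[OF assms, of "\<lambda>A. A $ i $ j"] by (simp add: transpose_def mat_def)
  have "N$i$i = 1" for i
    using entry[of i i] by (simp add: mult_2[symmetric])
  moreover have "N$1$2 = - N$2$1" "N$2$3 = - N$3$2" "N$3$1 = - N$1$3"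
    using entry[of 1 2] entry[of 2 3] entry[of 3 1] by (simp_all add: eq_neg_iff_add_eq_0)
  ultimately show ?thesis
    by (simp add: vec_eq_iff forall_3 cross_matrix_def mat_eq_mat3 mat3_add)
qed

lemma non_degenerate_equiv_cross_matrix:
  assumes "non_degenerate M"
  obtains v where "prod_equiv M (mat 1 + cross_matrix v)"
proof -
  let ?S = "M + transpose M"
  have "det ?S \<noteq> 0"
    using assms by (simp add: non_degenerate_def invertible_det_nz det_mul det_mat)
  moreover have "transpose ?S = ?S"
    by (simp add: transpose_add add.commute)
  ultimately obtain P where "det P \<noteq> 0" and P: "mat 1 = P ** ?S ** transpose P"
    using symmetric_congruent_mat_one unfolding congruent_mat_def by blast
  define g where "g = mat (inverse (2 * det P)) ** P"
  have "invertible g"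
    using \<open>det P \<noteq> 0\<close> by (simp add: g_def invertible_det_nz det_mul det_mat)
  have "gl_act g ?S = gl_act (mat (inverse (2 * det P))) (gl_act P ?S)"
    unfolding g_def by (rule gl_act_mult)
  also have "gl_act P ?S = mat (inverse (det P))"
    by (simp add: gl_act_def P[symmetric])
  also have "gl_act (mat (inverse (2 * det P))) (mat (inverse (det P))) = mat 2"
    using \<open>det P \<noteq> 0\<close> by (simp add: gl_act_mat mat_mult_mat)
  finally have "gl_act g M + transpose (gl_act g M) = mat 2"
    by (simp add: gl_act_add transpose_gl_act)
  then have "prod_equiv M (mat 1 + cross_matrix (vector [gl_act g M $3$2, gl_act g M $1$3, gl_act g M $2$1]))"
    using \<open>invertible g\<close> sym_part_eq_2_imp_cross_matrix unfolding prod_equiv_def by metis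
  then show ?thesis
    by (rule that)
qed

theorem proposition2p2:
  shows "(\<forall>M. non_degenerate M \<longrightarrow>
            (\<exists>a. a \<noteq> 0 \<and> prod_equiv M (mu1 a)) \<or> prod_equiv M mu2 \<or> prod_equiv M mu3)
       \<and> (\<forall>a. a \<noteq> 0 \<longrightarrow> \<not> prod_equiv (mu1 a) mu2 \<and> \<not> prod_equiv (mu1 a) mu3)
       \<and> \<not> prod_equiv mu2 mu3
       \<and> (\<forall>a a'. a \<noteq> 0 \<longrightarrow> a' \<noteq> 0 \<longrightarrow>
            (prod_equiv (mu1 a) (mu1 a') \<longleftrightarrow> a = a' \<or> a = - a'))"
proof (intro conjI allI impI)
  fix M
  assume "non_degenerate M"
  then obtain v where "prod_equiv M (mat 1 + cross_matrix v)"
    by (rule non_degenerate_equiv_cross_matrix)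
  then show "(\<exists>a. a \<noteq> 0 \<and> prod_equiv M (mu1 a)) \<or> prod_equiv M mu2 \<or> prod_equiv M mu3"
    using cross_matrix_classification[of v] prod_equiv_trans by blast
qed (simp_all add: mu1_not_equiv_mu2 mu1_not_equiv_mu3 mu2_not_equiv_mu3 mu1_equiv_mu1_iff)

end
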